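(* Let $G=T_1^{r_1}\times\cdots\times T_m^{r_m}$, where $T_1,\dots,T_m$ are pairwise non-isomorphic non-abelian finite simple groups and $r_1,\dots,r_m$ are positive integers. Then \[ \gamma^{\mathrm{ss}}_{\mathrm{cp}}(G)\le\max\{\gamma^{\mathrm{ss}}_{\mathrm{cp}}(T_1),\dots,\gamma^{\mathrm{ss}}_{\mathrm{cp}}(T_m)\}. \]
   Context: A factorization $G=A_1\cdots A_k$ (setwise) of a finite group $G$ with each $A_i$ conjugate in $G$ to $A\le G$ is a special solvable cp-factorization if (i) $A$ is solvable, (ii) $N_G(A)=A$, and (iii) for every $\alpha\in\mathrm{Aut}(G)$ there is $g\in G$ with $A^\alpha=A^g$. $\gamma^{\mathrm{ss}}_{\mathrm{cp}}(G)$ is the minimal length of a special solvable cp-factorization of $G$. *)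

theory Defs
  imports "HOL-Algebra.Algebra" "HOL-Algebra.Product_Groups" "HOL-Algebra.Solvable_Groups"
          "HOL-Algebra.SimpleGroups" "HOL-Algebra.Bij" "HOL-Library.Extended_Nat"
begin

definition conj_set :: "('a, 'b) monoid_scheme \<Rightarrow> 'a \<Rightarrow> 'a set \<Rightarrow> 'a set" where
  "conj_set G g A = (g <#\<^bsub>G\<^esub> A) #>\<^bsub>G\<^esub> (inv\<^bsub>G\<^esub> g)"

definition normalizer_set :: "('a, 'b) monoid_scheme \<Rightarrow> 'a set \<Rightarrow> 'a set" where
  "normalizer_set G A = {g \<in> carrier G. conj_set G g A = A}"

definition set_prod_list :: "('a, 'b) monoid_scheme \<Rightarrow> 'a set list \<Rightarrow> 'a set" where
  "set_prod_list G As = foldr (set_mult G) As {\<one>\<^bsub>G\<^esub>}"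

definition special_solvable_cp_fact :: "('a, 'b) monoid_scheme \<Rightarrow> 'a set \<Rightarrow> 'a set list \<Rightarrow> bool" where
  "special_solvable_cp_fact G A As \<longleftrightarrow>
     subgroup A G \<and> As \<noteq> [] \<and>
     (\<forall>B \<in> set As. \<exists>g \<in> carrier G. B = conj_set G g A) \<and>
     set_prod_list G As = carrier G \<and>
     solvable (G\<lparr>carrier := A\<rparr>) \<and>
     normalizer_set G A = A \<and>
     (\<forall>\<alpha> \<in> auto G. \<exists>g \<in> carrier G. \<alpha> ` A = conj_set G g A)"

text \<open>gamma^ss_cp(G): minimal length; infinity if no such factorization exists.\<close>
definition gamma_ss_cp :: "('a, 'b) monoid_scheme \<Rightarrow> enat" where
  "gamma_ss_cp G = Inf {enat (length As) | A As. special_solvable_cp_fact G A As}"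

end

theory Submission
  imports Defs
begin

text \<open>
  Take for every \<open>T\<^sub>j\<close> a special solvable cp-factorization of minimal length with subgroup
  \<open>A\<^sub>j\<close> and pad it with copies of \<open>A\<^sub>j\<close>, which does not change the product, to the common
  length \<open>k = max\<^sub>j \<gamma>(T\<^sub>j)\<close>. In \<open>G\<close>, the product of the \<open>A\<^sub>j\<close> over all simple direct factors
  together with the coordinatewise products of the \<open>n\<close>-th factors is again such a
  factorization, of length \<open>k\<close>: conjugates, set products, normalizers and solvability all
  behave coordinatewise. The only delicate condition is invariance under automorphisms. The
  simple direct factors are the minimal normal subgroups of \<open>G\<close>, so an automorphism permutes
  them; since the \<open>T\<^sub>j\<close> are pairwise non-isomorphic it only permutes copies of the same \<open>T\<^sub>j\<close>,
  and coordinatewise it acts by automorphisms of the \<open>T\<^sub>j\<close>, each of which maps \<open>A\<^sub>j\<close> to a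
  conjugate.
\<close>

lemma conj_set_eq_image:
  "conj_set G g A = (\<lambda>a. g \<otimes>\<^bsub>G\<^esub> a \<otimes>\<^bsub>G\<^esub> inv\<^bsub>G\<^esub> g) ` A"
  unfolding conj_set_def l_coset_def r_coset_def by auto

lemma (in group) conj_set_one:
  assumes "A \<subseteq> carrier G" shows "conj_set G \<one> A = A"
  using assms unfolding conj_set_eq_image by (auto simp: image_iff subset_iff)

lemma (in group) subgroup_set_mult_carrier:
  assumes "subgroup A G" shows "A <#> carrier G = carrier G"
proof
  show "A <#> carrier G \<subseteq> carrier G"
    using assms unfolding set_mult_def by (auto dest: subgroup.mem_carrier)
  show "carrier G \<subseteq> A <#> carrier G"
  proof
    fix x assume "x \<in> carrier G"
    then have "x = \<one> \<otimes> x" by simp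
    then show "x \<in> A <#> carrier G"
      unfolding set_mult_def using subgroup.one_closed[OF assms] \<open>x \<in> carrier G\<close> by blast
  qed
qed

lemma (in group) special_solvable_cp_fact_replicate_append:
  assumes "special_solvable_cp_fact G A As"
  shows "special_solvable_cp_fact G A (replicate n A @ As)"
proof -
  have sub: "subgroup A G" and prod: "set_prod_list G As = carrier G"
    using assms by (auto simp: special_solvable_cp_fact_def)
  have "set_prod_list G (replicate n A @ As) = carrier G"
    using prod by (induction n) (auto simp: set_prod_list_def subgroup_set_mult_carrier[OF sub])
  moreover have "\<exists>g\<in>carrier G. B = conj_set G g A" if "B \<in> set (replicate n A @ As)" for B
  proof -
    have "B = A \<or> B \<in> set As" using that by (auto split: if_splits)
    then show ?thesis
      using conj_set_one[OF subgroup.subset[OF sub]] one_closed assms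
      unfolding special_solvable_cp_fact_def by metis
  qed
  ultimately show ?thesis
    using assms unfolding special_solvable_cp_fact_def by auto
qed

lemma (in group) special_solvable_cp_fact_iso_image:
  assumes "special_solvable_cp_fact G A As" and \<phi>: "\<phi> \<in> iso G G"
  shows "\<exists>g\<in>carrier G. \<phi> ` A = conj_set G g A"
proof -
  define \<psi> where "\<psi> = restrict \<phi> (carrier G)"
  have "\<psi> \<in> iso G G"
    unfolding \<psi>_def by (rule iso_eq[OF \<phi>]) simp
  then have "\<psi> \<in> auto G"
    unfolding auto_def Bij_def iso_def \<psi>_def by auto
  then obtain g where "g \<in> carrier G" "\<psi> ` A = conj_set G g A"
    using assms unfolding special_solvable_cp_fact_def by blast
  moreover have "\<psi> ` A = \<phi> ` A"
    using assms subgroup.subset unfolding \<psi>_def special_solvable_cp_fact_def by fastforce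
  ultimately show ?thesis by auto
qed

lemma gamma_ss_cp_le:
  "special_solvable_cp_fact H A As \<Longrightarrow> gamma_ss_cp H \<le> enat (length As)"
  unfolding gamma_ss_cp_def by (auto intro: Inf_lower)

lemma gamma_ss_cp_attained:
  assumes "gamma_ss_cp H \<noteq> \<infinity>"
  obtains A As where "special_solvable_cp_fact H A As" "gamma_ss_cp H = enat (length As)"
proof -
  define S where "S = {enat (length As) | A As. special_solvable_cp_fact H A As}"
  have "S \<noteq> {}"
    using assms unfolding gamma_ss_cp_def S_def[symmetric] by (auto simp: Inf_enat_def)
  then have "Inf S \<in> S"
    unfolding Inf_enat_def by (auto intro: LeastI)
  then show ?thesis
    using that unfolding gamma_ss_cp_def S_def[symmetric] by (auto simp: S_def)
qed

lemma solvable_trivial_group: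
  "carrier H = {\<one>\<^bsub>H\<^esub>} \<Longrightarrow> solvable H"
  unfolding solvable_def using solvable_seq.unity[of H] by simp

lemma group_hom_restrict_product_group:
  assumes "J \<subseteq> I" and "\<And>i. i \<in> I \<Longrightarrow> group (G i)"
  shows "group_hom (product_group I G) (product_group J G) (\<lambda>x. restrict x J)"
  unfolding group_hom_def group_hom_axioms_def hom_def
  using assms by (auto simp: PiE_iff Int_absorb1[OF assms(1)] intro!: product_group restrict_ext)

lemma restrict_product_group_surj:
  assumes "J \<subseteq> I" and "\<And>i. i \<in> I \<Longrightarrow> group (G i)"
  shows "(\<lambda>x. restrict x J) ` carrier (product_group I G) = carrier (product_group J G)"
proof
  show "carrier (product_group J G) \<subseteq> (\<lambda>x. restrict x J) ` carrier (product_group I G)"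
  proof
    fix y assume y: "y \<in> carrier (product_group J G)"
    define x where "x = (\<lambda>i\<in>I. if i \<in> J then y i else \<one>\<^bsub>G i\<^esub>)"
    have "x \<in> carrier (product_group I G)"
      using y assms by (auto simp: x_def PiE_iff group.is_monoid)
    moreover have "restrict x J = y"
      using y by (auto simp: x_def PiE_iff extensional_def Int_absorb1[OF assms(1)])
    ultimately show "y \<in> (\<lambda>x. restrict x J) ` carrier (product_group I G)" by blast
  qed
qed (use assms(1) in \<open>auto simp: PiE_iff\<close>)

lemma solvable_product_group:
  assumes "finite I" "\<And>i. i \<in> I \<Longrightarrow> group (G i) \<and> solvable (G i)"
  shows "solvable (product_group I G)"
  using assms
proof (induction I rule: finite_induct)
  case empty
  show ?case by (rule solvable_trivial_group) (simp add: PiE_empty_domain restrict_def)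
next
  case (insert i I)
  have grp: "\<And>j. j \<in> insert i I \<Longrightarrow> group (G j)" using insert by blast
  define f where "f = (\<lambda>t. \<lambda>j\<in>insert i I. if j = i then t else \<one>\<^bsub>G j\<^esub>)"
  have "group (product_group (insert i I) G)" by (rule product_group) (rule grp)
  then have hom: "group_hom (G i) (product_group (insert i I) G) f"
    unfolding group_hom_def group_hom_axioms_def hom_def f_def
    using grp by (auto simp: PiE_iff group.is_monoid intro!: restrict_ext)
  have "kernel (product_group (insert i I) G) (product_group I G) (\<lambda>x. restrict x I)
      \<subseteq> f ` carrier (G i)"
  proof
    fix x assume "x \<in> kernel (product_group (insert i I) G) (product_group I G) (\<lambda>x. restrict x I)"
    then have x: "x \<in> (\<Pi>\<^sub>E j\<in>insert i I. carrier (G j))"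
      and one: "restrict x I = (\<lambda>j\<in>I. \<one>\<^bsub>G j\<^esub>)"
      unfolding kernel_def by auto
    have "x j = \<one>\<^bsub>G j\<^esub>" if "j \<in> I" for j
      using fun_cong[OF one, of j] that by simp
    then have "x = f (x i)"
      using x by (auto simp: f_def PiE_iff extensional_def)
    then show "x \<in> f ` carrier (G i)" using x by blast
  qed
  then show ?case
    using insert solvable_condition[OF hom group_hom_restrict_product_group[OF subset_insertI grp]
        restrict_product_group_surj[OF subset_insertI grp]]
    by blast
qed

definition center :: "('a, 'b) monoid_scheme \<Rightarrow> 'a set" where
  "center G = {z \<in> carrier G. \<forall>t\<in>carrier G. z \<otimes>\<^bsub>G\<^esub> t = t \<otimes>\<^bsub>G\<^esub> z}"

lemma (in group) inv_commute:
  assumes a: "a \<in> carrier G" and t: "t \<in> carrier G" and comm: "a \<otimes> t = t \<otimes> a"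
  shows "inv a \<otimes> t = t \<otimes> inv a"
proof -
  have "inv a \<otimes> t = inv a \<otimes> t \<otimes> (a \<otimes> inv a)" using a t by simp
  also have "\<dots> = inv a \<otimes> (a \<otimes> t) \<otimes> inv a" using a t comm by (simp add: m_assoc)
  also have "\<dots> = t \<otimes> inv a" using a t by (simp add: m_assoc[symmetric])
  finally show ?thesis .
qed

lemma (in group) center_normal: "center G \<lhd> G"
  unfolding normal_inv_iff
proof (intro conjI ballI)
  show "subgroup (center G) G"
  proof (rule subgroupI)
    show "center G \<subseteq> carrier G" "center G \<noteq> {}" unfolding center_def by auto
    show "inv a \<in> center G" if "a \<in> center G" for a
      using that inv_commute unfolding center_def by auto
    show "a \<otimes> b \<in> center G" if "a \<in> center G" and "b \<in> center G" for a b
    proof -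
      have a: "a \<in> carrier G" "\<And>t. t \<in> carrier G \<Longrightarrow> a \<otimes> t = t \<otimes> a"
        and b: "b \<in> carrier G" "\<And>t. t \<in> carrier G \<Longrightarrow> b \<otimes> t = t \<otimes> b"
        using that unfolding center_def by auto
      have "a \<otimes> b \<otimes> t = t \<otimes> (a \<otimes> b)" if t: "t \<in> carrier G" for t
      proof -
        have "a \<otimes> b \<otimes> t = a \<otimes> t \<otimes> b" using a(1) b t by (simp add: m_assoc)
        also have "\<dots> = t \<otimes> (a \<otimes> b)" using a(1) b(1) t by (simp only: a(2)[OF t] m_assoc)
        finally show ?thesis .
      qed
      then show ?thesis using a(1) b(1) unfolding center_def by blast
    qed
  qed
  fix x h assume x: "x \<in> carrier G" and h: "h \<in> center G"
  then have "h \<in> carrier G" "x \<otimes> h = h \<otimes> x" unfolding center_def by auto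
  then have "x \<otimes> h \<otimes> inv x = h" using x by (simp add: m_assoc)
  then show "x \<otimes> h \<otimes> inv x \<in> center G" using h by simp
qed

lemma (in simple_group) central_eq_one:
  assumes "\<not> comm_group G" and z: "z \<in> carrier G"
    and central: "\<And>t. t \<in> carrier G \<Longrightarrow> z \<otimes> t = t \<otimes> z"
  shows "z = \<one>"
proof -
  have "center G \<noteq> carrier G"
  proof
    assume "center G = carrier G"
    then have "comm_group G" by (intro group_comm_groupI) (auto simp: center_def)
    with assms(1) show False by simp
  qed
  then have "center G = {\<one>}" using no_real_normal_subgroup[OF center_normal] by blast
  moreover have "z \<in> center G" using z central unfolding center_def by blast
  ultimately show ?thesis by blast
qed

lemma (in group_hom) normal_vimage:
  assumes "N \<lhd> H" shows "{x \<in> carrier G. h x \<in> N} \<lhd> G"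
proof -
  interpret N: normal N H by (rule assms)
  show ?thesis
    unfolding G.normal_inv_iff
  proof (intro conjI ballI)
    show "subgroup {x \<in> carrier G. h x \<in> N} G"
      by (rule G.subgroupI) (auto intro: N.m_closed N.m_inv_closed)
    show "x \<otimes> y \<otimes> inv x \<in> {x \<in> carrier G. h x \<in> N}"
      if "x \<in> carrier G" "y \<in> {x \<in> carrier G. h x \<in> N}" for x y
      using that N.inv_op_closed2 by simp
  qed
qed

lemma (in group) commutator_eq_one_imp_commute:
  assumes "t \<in> carrier G" "x \<in> carrier G" "t \<otimes> x \<otimes> inv t \<otimes> inv x = \<one>"
  shows "t \<otimes> x = x \<otimes> t"
proof -
  have "t \<otimes> x \<otimes> inv t = x"
    using assms inv_solve_right'[of "\<one>" "t \<otimes> x \<otimes> inv t" x] by simp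
  then show ?thesis using assms inv_solve_right'[of x "t \<otimes> x" t] by simp
qed

lemma image_eq_if_vimage_eq:
  assumes "f ` C = C" and "T \<subseteq> C" and "S = {x \<in> C. f x \<in> T}"
  shows "f ` S = T"
proof
  show "f ` S \<subseteq> T" using assms(3) by blast
  show "T \<subseteq> f ` S"
  proof
    fix t assume t: "t \<in> T"
    then obtain x where "x \<in> C" "t = f x" using assms(1,2) by blast
    then show "t \<in> f ` S" using assms(3) t by blast
  qed
qed

locale group_family =
  fixes I :: "'i set" and G :: "'i \<Rightarrow> ('a, 'b) monoid_scheme"
  assumes group_member: "\<And>i. i \<in> I \<Longrightarrow> group (G i)"
begin

abbreviation P where "P \<equiv> product_group I G"

lemma group_P: "group P"
  using group_member by simp

lemma inv_P_apply [simp]: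
  "x \<in> carrier P \<Longrightarrow> j \<in> I \<Longrightarrow> (inv\<^bsub>P\<^esub> x) j = inv\<^bsub>G j\<^esub> (x j)"
  using group_member by simp

lemma P_eqI:
  "x \<in> carrier P \<Longrightarrow> y \<in> carrier P \<Longrightarrow> (\<And>j. j \<in> I \<Longrightarrow> x j = y j) \<Longrightarrow> x = y"
  by (rule extensionalityI[of x I y]) (auto simp: PiE_iff)

lemma set_mult_PiE:
  "PiE I F <#>\<^bsub>P\<^esub> PiE I H = PiE I (\<lambda>i. F i <#>\<^bsub>G i\<^esub> H i)"
proof
  show "PiE I F <#>\<^bsub>P\<^esub> PiE I H \<subseteq> PiE I (\<lambda>i. F i <#>\<^bsub>G i\<^esub> H i)"
    unfolding set_mult_def by (auto simp: PiE_iff; blast)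
  show "PiE I (\<lambda>i. F i <#>\<^bsub>G i\<^esub> H i) \<subseteq> PiE I F <#>\<^bsub>P\<^esub> PiE I H"
  proof
    fix z assume z: "z \<in> PiE I (\<lambda>i. F i <#>\<^bsub>G i\<^esub> H i)"
    then obtain a b where ab: "\<And>i. i \<in> I \<Longrightarrow> a i \<in> F i \<and> b i \<in> H i \<and> z i = a i \<otimes>\<^bsub>G i\<^esub> b i"
      unfolding set_mult_def PiE_iff by simp metis
    have "restrict a I \<in> PiE I F" "restrict b I \<in> PiE I H" using ab by auto
    moreover have "z = restrict a I \<otimes>\<^bsub>P\<^esub> restrict b I"
      using z ab by (auto simp: PiE_iff extensional_def)
    ultimately show "z \<in> PiE I F <#>\<^bsub>P\<^esub> PiE I H" unfolding set_mult_def by blast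
  qed
qed

lemma set_prod_list_PiE:
  "set_prod_list P (map (PiE I) Fs) = PiE I (\<lambda>i. set_prod_list (G i) (map (\<lambda>F. F i) Fs))"
proof -
  have "{\<one>\<^bsub>P\<^esub>} = PiE I (\<lambda>i. {\<one>\<^bsub>G i\<^esub>})"
    using PiE_eq_singleton[of I "\<lambda>i. {\<one>\<^bsub>G i\<^esub>}" "\<lambda>i. \<one>\<^bsub>G i\<^esub>"] by simp
  then show ?thesis
    by (induction Fs) (simp_all add: set_prod_list_def set_mult_PiE)
qed

lemma set_prod_list_PiE_nth:
  assumes "\<And>i. i \<in> I \<Longrightarrow> length (Cs i) = k"
  shows "set_prod_list P (map (\<lambda>n. PiE I (\<lambda>i. Cs i ! n)) [0..<k])
    = PiE I (\<lambda>i. set_prod_list (G i) (Cs i))"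
proof -
  have "set_prod_list P (map (\<lambda>n. PiE I (\<lambda>i. Cs i ! n)) [0..<k])
      = set_prod_list P (map (PiE I) (map (\<lambda>n i. Cs i ! n) [0..<k]))"
    by (simp add: comp_def)
  also have "\<dots> = PiE I (\<lambda>i. set_prod_list (G i) (map (\<lambda>F. F i) (map (\<lambda>n i. Cs i ! n) [0..<k])))"
    by (rule set_prod_list_PiE)
  also have "\<dots> = PiE I (\<lambda>i. set_prod_list (G i) (Cs i))"
  proof (rule PiE_cong)
    fix i assume "i \<in> I"
    then have "map (\<lambda>F. F i) (map (\<lambda>n i. Cs i ! n) [0..<k]) = Cs i"
      using map_nth[of "Cs i"] assms by (simp add: comp_def)
    then show "set_prod_list (G i) (map (\<lambda>F. F i) (map (\<lambda>n i. Cs i ! n) [0..<k]))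
        = set_prod_list (G i) (Cs i)" by simp
  qed
  finally show ?thesis .
qed

lemma conj_set_PiE:
  assumes g: "g \<in> carrier P" and F: "\<And>i. i \<in> I \<Longrightarrow> F i \<subseteq> carrier (G i)"
  shows "conj_set P g (PiE I F) = PiE I (\<lambda>i. conj_set (G i) (g i) (F i))"
proof
  have ginv: "inv\<^bsub>P\<^esub> g = (\<lambda>i\<in>I. inv\<^bsub>G i\<^esub> g i)" using g group_member by simp
  show "conj_set P g (PiE I F) \<subseteq> PiE I (\<lambda>i. conj_set (G i) (g i) (F i))"
    unfolding conj_set_eq_image ginv by (auto simp: PiE_iff)
  show "PiE I (\<lambda>i. conj_set (G i) (g i) (F i)) \<subseteq> conj_set P g (PiE I F)"
  proof
    fix z assume z: "z \<in> PiE I (\<lambda>i. conj_set (G i) (g i) (F i))"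
    then have "\<forall>i\<in>I. \<exists>a. a \<in> F i \<and> z i = g i \<otimes>\<^bsub>G i\<^esub> a \<otimes>\<^bsub>G i\<^esub> inv\<^bsub>G i\<^esub> g i"
      unfolding conj_set_eq_image by (auto simp: PiE_iff)
    then obtain a where a: "\<And>i. i \<in> I \<Longrightarrow> a i \<in> F i \<and> z i = g i \<otimes>\<^bsub>G i\<^esub> a i \<otimes>\<^bsub>G i\<^esub> inv\<^bsub>G i\<^esub> g i"
      by metis
    have "restrict a I \<in> PiE I F" using a by auto
    moreover have "z = g \<otimes>\<^bsub>P\<^esub> restrict a I \<otimes>\<^bsub>P\<^esub> inv\<^bsub>P\<^esub> g"
      using z a unfolding ginv by (auto simp: PiE_iff extensional_def)
    ultimately show "z \<in> conj_set P g (PiE I F)" unfolding conj_set_eq_image by blast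
  qed
qed

lemma PiE_conj_setI:
  assumes A: "\<And>i. i \<in> I \<Longrightarrow> A i \<subseteq> carrier (G i)"
    and conj: "\<And>i. i \<in> I \<Longrightarrow> \<exists>g\<in>carrier (G i). B i = conj_set (G i) g (A i)"
  shows "\<exists>g\<in>carrier P. PiE I B = conj_set P g (PiE I A)"
proof -
  obtain g where g: "\<And>i. i \<in> I \<Longrightarrow> g i \<in> carrier (G i) \<and> B i = conj_set (G i) (g i) (A i)"
    using conj by metis
  have gc: "restrict g I \<in> carrier P" using g by auto
  have "conj_set P (restrict g I) (PiE I A) = PiE I (\<lambda>i. conj_set (G i) (g i) (A i))"
    by (simp add: conj_set_PiE[OF gc A] cong: PiE_cong)
  also have "\<dots> = PiE I B" using g by (intro PiE_cong) auto
  finally show ?thesis using gc by metis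
qed

lemma normalizer_set_PiE:
  assumes sub: "\<And>i. i \<in> I \<Longrightarrow> subgroup (A i) (G i)"
    and self_normalizing: "\<And>i. i \<in> I \<Longrightarrow> normalizer_set (G i) (A i) = A i"
  shows "normalizer_set P (PiE I A) = PiE I A"
proof -
  have A: "\<And>i. i \<in> I \<Longrightarrow> A i \<subseteq> carrier (G i)" using sub subgroup.subset by blast
  have ne: "\<And>i. i \<in> I \<Longrightarrow> A i \<noteq> {}" using sub subgroup.one_closed by blast
  have "g \<in> normalizer_set P (PiE I A) \<longleftrightarrow> g \<in> PiE I A" for g
  proof (cases "g \<in> carrier P")
    case True
    then have "g \<in> normalizer_set P (PiE I A) \<longleftrightarrow> (\<forall>i\<in>I. conj_set (G i) (g i) (A i) = A i)"
      using conj_set_PiE[OF True A] ne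
      by (simp add: normalizer_set_def PiE_eq_iff_not_empty conj_set_eq_image)
    also have "\<dots> \<longleftrightarrow> (\<forall>i\<in>I. g i \<in> normalizer_set (G i) (A i))"
      using True by (auto simp: normalizer_set_def PiE_iff)
    also have "\<dots> \<longleftrightarrow> (\<forall>i\<in>I. g i \<in> A i)"
      using self_normalizing by simp
    finally show ?thesis using True by (auto simp: PiE_iff)
  next
    case False
    then show ?thesis using A by (auto simp: normalizer_set_def PiE_iff)
  qed
  then show ?thesis by blast
qed

lemma solvable_PiE:
  assumes "finite I" and "\<And>i. i \<in> I \<Longrightarrow> subgroup (A i) (G i) \<and> solvable ((G i)\<lparr>carrier := A i\<rparr>)"
  shows "solvable (P\<lparr>carrier := PiE I A\<rparr>)"
proof -
  have "P\<lparr>carrier := PiE I A\<rparr> = product_group I (\<lambda>i. (G i)\<lparr>carrier := A i\<rparr>)"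
    by (simp add: product_group_def)
  also have "solvable \<dots>"
  proof (rule solvable_product_group[OF assms(1)])
    fix i assume "i \<in> I"
    then show "group ((G i)\<lparr>carrier := A i\<rparr>) \<and> solvable ((G i)\<lparr>carrier := A i\<rparr>)"
      using assms(2) group_member subgroup.subgroup_is_group by blast
  qed
  finally show ?thesis .
qed

definition coord_emb :: "'i \<Rightarrow> 'a \<Rightarrow> 'i \<Rightarrow> 'a" where
  "coord_emb i t = (\<lambda>j\<in>I. if j = i then t else \<one>\<^bsub>G j\<^esub>)"

definition coord_factor :: "'i \<Rightarrow> ('i \<Rightarrow> 'a) set" where
  "coord_factor i = coord_emb i ` carrier (G i)"

lemma coord_emb_carrier: "i \<in> I \<Longrightarrow> t \<in> carrier (G i) \<Longrightarrow> coord_emb i t \<in> carrier P"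
  using group_member by (auto simp: coord_emb_def PiE_iff group.is_monoid)

lemma coord_emb_same [simp]: "i \<in> I \<Longrightarrow> coord_emb i t i = t"
  by (simp add: coord_emb_def)

lemma coord_emb_other [simp]: "j \<in> I \<Longrightarrow> j \<noteq> i \<Longrightarrow> coord_emb i t j = \<one>\<^bsub>G j\<^esub>"
  by (simp add: coord_emb_def)

lemma coord_emb_mult:
  "i \<in> I \<Longrightarrow> s \<in> carrier (G i) \<Longrightarrow> t \<in> carrier (G i) \<Longrightarrow>
    coord_emb i (s \<otimes>\<^bsub>G i\<^esub> t) = coord_emb i s \<otimes>\<^bsub>P\<^esub> coord_emb i t"
  using group_member by (auto simp: coord_emb_def group.is_monoid intro!: restrict_ext)

lemma group_hom_coord_emb: "i \<in> I \<Longrightarrow> group_hom (G i) P (coord_emb i)"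
  unfolding group_hom_def group_hom_axioms_def
  using group_member group_P by (auto intro!: homI coord_emb_carrier coord_emb_mult)

lemma coord_factor_eq:
  assumes "p \<in> I"
  shows "coord_factor p = {z \<in> carrier P. \<forall>j\<in>I. j \<noteq> p \<longrightarrow> z j = \<one>\<^bsub>G j\<^esub>}"
proof
  show "coord_factor p \<subseteq> {z \<in> carrier P. \<forall>j\<in>I. j \<noteq> p \<longrightarrow> z j = \<one>\<^bsub>G j\<^esub>}"
    using coord_emb_carrier[OF assms] by (auto simp: coord_factor_def)
  show "{z \<in> carrier P. \<forall>j\<in>I. j \<noteq> p \<longrightarrow> z j = \<one>\<^bsub>G j\<^esub>} \<subseteq> coord_factor p"
  proof
    fix z assume z: "z \<in> {z \<in> carrier P. \<forall>j\<in>I. j \<noteq> p \<longrightarrow> z j = \<one>\<^bsub>G j\<^esub>}"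
    then have "z p \<in> carrier (G p)" using assms by auto
    moreover have "z = coord_emb p (z p)"
      using z assms by (intro P_eqI coord_emb_carrier) (auto simp: coord_emb_def)
    ultimately show "z \<in> coord_factor p" unfolding coord_factor_def by blast
  qed
qed

lemma coord_factor_subset_carrier: "p \<in> I \<Longrightarrow> coord_factor p \<subseteq> carrier P"
  using coord_factor_eq by blast

lemma coord_factor_elem:
  "q \<in> I \<Longrightarrow> z \<in> coord_factor q \<Longrightarrow> z q \<in> carrier (G q) \<and> z = coord_emb q (z q)"
  by (auto simp: coord_factor_def)

lemma coord_factor_normal:
  assumes p: "p \<in> I" shows "coord_factor p \<lhd> P"
  unfolding group.normal_inv_iff[OF group_P]
proof (intro conjI ballI)
  interpret Gp: group "G p" using group_member p by blast
  show "subgroup (coord_factor p) P"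
    unfolding coord_factor_def
    by (rule group_hom.subgroup_img_is_subgroup[OF group_hom_coord_emb[OF p] Gp.subgroup_self])
  fix x h assume x: "x \<in> carrier P" and h: "h \<in> coord_factor p"
  have hc: "h \<in> carrier P" using h coord_factor_subset_carrier[OF p] by blast
  have "(x \<otimes>\<^bsub>P\<^esub> h \<otimes>\<^bsub>P\<^esub> inv\<^bsub>P\<^esub> x) j = \<one>\<^bsub>G j\<^esub>" if j: "j \<in> I" "j \<noteq> p" for j
  proof -
    interpret Gj: group "G j" using group_member j by blast
    have "h j = \<one>\<^bsub>G j\<^esub>" using h j coord_factor_eq[OF p] by blast
    moreover have "(x \<otimes>\<^bsub>P\<^esub> h \<otimes>\<^bsub>P\<^esub> inv\<^bsub>P\<^esub> x) j = x j \<otimes>\<^bsub>G j\<^esub> h j \<otimes>\<^bsub>G j\<^esub> inv\<^bsub>G j\<^esub> (x j)"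
      using j x by simp
    moreover have "x j \<in> carrier (G j)" using x j by auto
    ultimately show ?thesis by simp
  qed
  moreover have "x \<otimes>\<^bsub>P\<^esub> h \<otimes>\<^bsub>P\<^esub> inv\<^bsub>P\<^esub> x \<in> carrier P"
    using x hc by (intro monoid.m_closed[OF group.is_monoid[OF group_P]] group.inv_closed[OF group_P])
  ultimately show "x \<otimes>\<^bsub>P\<^esub> h \<otimes>\<^bsub>P\<^esub> inv\<^bsub>P\<^esub> x \<in> coord_factor p"
    using coord_factor_eq[OF p] by blast
qed

lemma commute_with_coord_factor:
  assumes p: "p \<in> I" and y: "y \<in> carrier P" "y p = \<one>\<^bsub>G p\<^esub>" and u: "u \<in> coord_factor p"
  shows "y \<otimes>\<^bsub>P\<^esub> u = u \<otimes>\<^bsub>P\<^esub> y"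
proof -
  have uc: "u \<in> carrier P" using u coord_factor_subset_carrier[OF p] by blast
  have u1: "\<And>j. j \<in> I \<Longrightarrow> j \<noteq> p \<Longrightarrow> u j = \<one>\<^bsub>G j\<^esub>" using u coord_factor_eq[OF p] by blast
  show ?thesis
  proof (rule P_eqI)
    show "y \<otimes>\<^bsub>P\<^esub> u \<in> carrier P" using group.is_monoid[OF group_P] y(1) uc by (rule monoid.m_closed)
    show "u \<otimes>\<^bsub>P\<^esub> y \<in> carrier P" using group.is_monoid[OF group_P] uc y(1) by (rule monoid.m_closed)
    fix j assume j: "j \<in> I"
    interpret Gj: group "G j" using group_member j by blast
    have "y j \<in> carrier (G j)" "u j \<in> carrier (G j)" using y(1) uc j by auto
    moreover have "y j = \<one>\<^bsub>G j\<^esub> \<or> u j = \<one>\<^bsub>G j\<^esub>" using y(2) u1 j by (cases "j = p") auto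
    ultimately show "(y \<otimes>\<^bsub>P\<^esub> u) j = (u \<otimes>\<^bsub>P\<^esub> y) j" using j by auto
  qed
qed

lemma coord_hom:
  assumes h: "\<alpha> \<in> hom P P" and p: "p \<in> I" and q: "q \<in> I"
    and img: "\<alpha> ` coord_factor p \<subseteq> coord_factor q"
  shows "(\<lambda>t. \<alpha> (coord_emb p t) q) \<in> hom (G p) (G q)"
proof (rule homI)
  fix s t assume s: "s \<in> carrier (G p)" and t: "t \<in> carrier (G p)"
  have "\<alpha> (coord_emb p s) \<in> coord_factor q" using img s unfolding coord_factor_def by blast
  then show "\<alpha> (coord_emb p s) q \<in> carrier (G q)" using coord_factor_elem[OF q] by blast
  have "\<alpha> (coord_emb p (s \<otimes>\<^bsub>G p\<^esub> t)) = \<alpha> (coord_emb p s) \<otimes>\<^bsub>P\<^esub> \<alpha> (coord_emb p t)"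
    using coord_emb_mult[OF p s t] hom_mult[OF h coord_emb_carrier[OF p s] coord_emb_carrier[OF p t]]
    by (simp del: mult_product_group)
  then show "\<alpha> (coord_emb p (s \<otimes>\<^bsub>G p\<^esub> t)) q = \<alpha> (coord_emb p s) q \<otimes>\<^bsub>G q\<^esub> \<alpha> (coord_emb p t) q"
    using q by simp
qed

lemma coord_iso:
  assumes \<alpha>: "\<alpha> \<in> iso P P" and p: "p \<in> I" and q: "q \<in> I"
    and img: "\<alpha> ` coord_factor p = coord_factor q"
  shows "(\<lambda>t. \<alpha> (coord_emb p t) q) \<in> iso (G p) (G q)"
proof -
  have h: "\<alpha> \<in> hom P P" and inj: "inj_on \<alpha> (carrier P)" using \<alpha> by (auto simp: iso_iff)
  have hom: "(\<lambda>t. \<alpha> (coord_emb p t) q) \<in> hom (G p) (G q)"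
    using coord_hom[OF h p q] img by blast
  have emb: "\<alpha> (coord_emb p t) = coord_emb q (\<alpha> (coord_emb p t) q)" if t: "t \<in> carrier (G p)" for t
  proof -
    have "\<alpha> (coord_emb p t) \<in> coord_factor q" using img t unfolding coord_factor_def by blast
    then show ?thesis using coord_factor_elem[OF q] by blast
  qed
  have "inj_on (\<lambda>t. \<alpha> (coord_emb p t) q) (carrier (G p))"
  proof (rule inj_onI)
    fix s t assume s: "s \<in> carrier (G p)" and t: "t \<in> carrier (G p)"
      and "\<alpha> (coord_emb p s) q = \<alpha> (coord_emb p t) q"
    then have "\<alpha> (coord_emb p s) = \<alpha> (coord_emb p t)" using emb[OF s] emb[OF t] by metis
    then have "coord_emb p s = coord_emb p t"
      using inj_onD[OF inj _ coord_emb_carrier[OF p s] coord_emb_carrier[OF p t]] by blast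
    then show "s = t" using coord_emb_same[OF p] by metis
  qed
  moreover have "carrier (G q) \<subseteq> (\<lambda>t. \<alpha> (coord_emb p t) q) ` carrier (G p)"
  proof
    fix u assume u: "u \<in> carrier (G q)"
    then have "coord_emb q u \<in> \<alpha> ` coord_factor p" using img unfolding coord_factor_def by blast
    then obtain t where "t \<in> carrier (G p)" "coord_emb q u = \<alpha> (coord_emb p t)"
      unfolding coord_factor_def by blast
    moreover from this have "u = \<alpha> (coord_emb p t) q" using coord_emb_same[OF q, of u] by simp
    ultimately show "u \<in> (\<lambda>t. \<alpha> (coord_emb p t) q) ` carrier (G p)" by blast
  qed
  moreover have "(\<lambda>t. \<alpha> (coord_emb p t) q) ` carrier (G p) \<subseteq> carrier (G q)"
    using hom by (auto simp: hom_def)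
  ultimately show ?thesis using hom by (auto simp: iso_def bij_betw_def)
qed

end

locale nonabelian_simple_family = group_family +
  assumes simple_member: "\<And>i. i \<in> I \<Longrightarrow> simple_group (G i)"
    and noncomm_member: "\<And>i. i \<in> I \<Longrightarrow> \<not> comm_group (G i)"
begin

lemma nontrivial_member:
  assumes "p \<in> I" obtains t where "t \<in> carrier (G p)" "t \<noteq> \<one>\<^bsub>G p\<^esub>"
  using simple_group.simple_not_triv[OF simple_member[OF assms]]
    monoid.one_closed[OF group.is_monoid[OF group_member[OF assms]]] by blast

lemma coord_factor_subset_imp_eq:
  assumes p: "p \<in> I" and p': "p' \<in> I" and sub: "coord_factor p' \<subseteq> coord_factor p"
  shows "p' = p"
proof (rule ccontr)
  assume "p' \<noteq> p"
  obtain t where t: "t \<in> carrier (G p')" "t \<noteq> \<one>\<^bsub>G p'\<^esub>" using nontrivial_member[OF p'] .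
  have "coord_emb p' t \<in> coord_factor p" using sub t unfolding coord_factor_def by blast
  then have "coord_emb p' t p' = \<one>\<^bsub>G p'\<^esub>" using coord_factor_eq[OF p] p' \<open>p' \<noteq> p\<close> by blast
  with t p' show False by simp
qed

lemma commutes_with_coord_factor_imp_one:
  assumes q: "q \<in> I" and z: "z \<in> carrier P"
    and comm: "\<And>u. u \<in> coord_factor q \<Longrightarrow> z \<otimes>\<^bsub>P\<^esub> u = u \<otimes>\<^bsub>P\<^esub> z"
  shows "z q = \<one>\<^bsub>G q\<^esub>"
proof (rule simple_group.central_eq_one[OF simple_member[OF q] noncomm_member[OF q]])
  show "z q \<in> carrier (G q)" using z q by auto
  fix t assume "t \<in> carrier (G q)"
  then have "(z \<otimes>\<^bsub>P\<^esub> coord_emb q t) q = (coord_emb q t \<otimes>\<^bsub>P\<^esub> z) q"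
    using comm unfolding coord_factor_def by simp
  then show "z q \<otimes>\<^bsub>G q\<^esub> t = t \<otimes>\<^bsub>G q\<^esub> z q" using q by simp
qed

text \<open>The commutator of \<open>m\<close> with an element of the \<open>q\<close>-th factor that does not commute
  with \<open>m\<close> lies in both normal subgroups \<open>M\<close> and \<open>coord_factor q\<close>.\<close>

lemma normal_subgroup_meets_coord_factor:
  assumes M: "M \<lhd> P" and m: "m \<in> M" and q: "q \<in> I" and mq: "m q \<noteq> \<one>\<^bsub>G q\<^esub>"
  shows "\<exists>c \<in> M \<inter> coord_factor q. c \<noteq> \<one>\<^bsub>P\<^esub>"
proof -
  interpret PG: group P by (rule group_P)
  interpret Mn: normal M P using M .
  interpret Nq: normal "coord_factor q" P by (rule coord_factor_normal[OF q])
  have mc: "m \<in> carrier P" using m Mn.subset by blast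
  obtain u where u: "u \<in> coord_factor q" "m \<otimes>\<^bsub>P\<^esub> u \<noteq> u \<otimes>\<^bsub>P\<^esub> m"
    using commutes_with_coord_factor_imp_one[OF q mc] mq by blast
  have uc: "u \<in> carrier P" using u(1) Nq.subset by blast
  define c where "c = u \<otimes>\<^bsub>P\<^esub> m \<otimes>\<^bsub>P\<^esub> inv\<^bsub>P\<^esub> u \<otimes>\<^bsub>P\<^esub> inv\<^bsub>P\<^esub> m"
  have "c \<in> M"
    unfolding c_def using Mn.inv_op_closed2[OF uc m] Mn.m_inv_closed[OF m] Mn.m_closed by blast
  moreover have "c \<in> coord_factor q"
  proof -
    have "c = u \<otimes>\<^bsub>P\<^esub> (m \<otimes>\<^bsub>P\<^esub> inv\<^bsub>P\<^esub> u \<otimes>\<^bsub>P\<^esub> inv\<^bsub>P\<^esub> m)"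
      unfolding c_def by (simp only: PG.m_assoc PG.m_closed PG.inv_closed uc mc)
    moreover have "m \<otimes>\<^bsub>P\<^esub> inv\<^bsub>P\<^esub> u \<otimes>\<^bsub>P\<^esub> inv\<^bsub>P\<^esub> m \<in> coord_factor q"
      using Nq.inv_op_closed2[OF mc Nq.m_inv_closed[OF u(1)]] .
    ultimately show ?thesis using Nq.m_closed[OF u(1)] by metis
  qed
  moreover have "c \<noteq> \<one>\<^bsub>P\<^esub>"
  proof
    assume "c = \<one>\<^bsub>P\<^esub>"
    then have "u \<otimes>\<^bsub>P\<^esub> m = m \<otimes>\<^bsub>P\<^esub> u"
      using PG.commutator_eq_one_imp_commute[OF uc mc] unfolding c_def by blast
    with u(2) show False by simp
  qed
  ultimately show ?thesis by blast
qed

lemma normal_subgroup_contains_coord_factor: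
  assumes M: "M \<lhd> P" and q: "q \<in> I"
    and c: "c \<in> M \<inter> coord_factor q" "c \<noteq> \<one>\<^bsub>P\<^esub>"
  shows "coord_factor q \<subseteq> M"
proof -
  interpret Gq: simple_group "G q" using simple_member q by blast
  have "{s \<in> carrier (G q). coord_emb q s \<in> M} \<lhd> G q"
    by (rule group_hom.normal_vimage[OF group_hom_coord_emb[OF q] M])
  then have "{s \<in> carrier (G q). coord_emb q s \<in> M} = carrier (G q)
      \<or> {s \<in> carrier (G q). coord_emb q s \<in> M} = {\<one>\<^bsub>G q\<^esub>}"
    by (rule Gq.no_real_normal_subgroup)
  moreover obtain s where s: "c = coord_emb q s" "s \<in> carrier (G q)"
    using c(1) unfolding coord_factor_def by blast
  moreover have "s \<noteq> \<one>\<^bsub>G q\<^esub>"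
    using s(1) c(2) group_hom.hom_one[OF group_hom_coord_emb[OF q]] by metis
  ultimately have "{s \<in> carrier (G q). coord_emb q s \<in> M} = carrier (G q)" using c(1) by blast
  then show ?thesis unfolding coord_factor_def by blast
qed

lemma nontrivial_normal_subgroup_contains_coord_factor:
  assumes M: "M \<lhd> P" and ne: "M \<noteq> {\<one>\<^bsub>P\<^esub>}"
  shows "\<exists>q\<in>I. coord_factor q \<subseteq> M"
proof -
  have "\<one>\<^bsub>P\<^esub> \<in> M" using M normal_imp_subgroup subgroup.one_closed by blast
  then obtain m where m: "m \<in> M" "m \<noteq> \<one>\<^bsub>P\<^esub>" using ne by blast
  have "m \<in> carrier P" using m M normal_imp_subgroup subgroup.subset by blast
  then obtain q where q: "q \<in> I" "m q \<noteq> \<one>\<^bsub>G q\<^esub>"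
    using m(2) P_eqI[of m "\<one>\<^bsub>P\<^esub>"] group_member by (force simp: group.is_monoid)
  show ?thesis
    using normal_subgroup_meets_coord_factor[OF M m(1) q] normal_subgroup_contains_coord_factor[OF M q(1)]
      q(1) by blast
qed

lemma coord_factor_nontrivial:
  assumes p: "p \<in> I" shows "coord_factor p \<noteq> {\<one>\<^bsub>P\<^esub>}"
proof -
  obtain t where t: "t \<in> carrier (G p)" "t \<noteq> \<one>\<^bsub>G p\<^esub>" using nontrivial_member[OF p] .
  have "coord_emb p t \<in> coord_factor p" unfolding coord_factor_def using t(1) by blast
  moreover have "coord_emb p t p \<noteq> \<one>\<^bsub>P\<^esub> p" using t p by simp
  ultimately show ?thesis by force
qed

lemma iso_image_contains_coord_factor:
  assumes \<alpha>: "\<alpha> \<in> iso P P" and M: "M \<lhd> P" and ne: "M \<noteq> {\<one>\<^bsub>P\<^esub>}"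
  shows "\<exists>q\<in>I. coord_factor q \<subseteq> \<alpha> ` M"
proof (rule nontrivial_normal_subgroup_contains_coord_factor)
  show "\<alpha> ` M \<lhd> P" by (rule iso_normal_subgroup[OF \<alpha> group_P group_P M])
  have gh: "group_hom P P \<alpha>"
    using \<alpha> group_P by (auto simp: group_hom_def group_hom_axioms_def iso_iff)
  have inj: "inj_on \<alpha> (carrier P)" using \<alpha> by (auto simp: iso_iff)
  have "\<one>\<^bsub>P\<^esub> \<in> M" "M \<subseteq> carrier P" using M normal_imp_subgroup subgroup.one_closed subgroup.subset
    by blast+
  then obtain m where m: "m \<in> M" "m \<noteq> \<one>\<^bsub>P\<^esub>" "m \<in> carrier P" using ne by blast
  then have "\<alpha> m \<noteq> \<alpha> \<one>\<^bsub>P\<^esub>"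
    using inj_onD[OF inj] group.is_monoid[OF group_P] monoid.one_closed by metis
  then show "\<alpha> ` M \<noteq> {\<one>\<^bsub>P\<^esub>}" using m(1) group_hom.hom_one[OF gh] by force
qed

lemma iso_image_coord_factor:
  assumes \<alpha>: "\<alpha> \<in> iso P P" and p: "p \<in> I"
  shows "\<exists>q\<in>I. \<alpha> ` coord_factor p = coord_factor q"
proof -
  have inj: "inj_on \<alpha> (carrier P)" and sur: "\<alpha> ` carrier P = carrier P"
    using \<alpha> by (auto simp: iso_iff)
  define \<beta> where "\<beta> = inv_into (carrier P) \<alpha>"
  have \<beta>: "\<beta> \<in> iso P P" unfolding \<beta>_def by (rule group.iso_set_sym[OF group_P \<alpha>])
  obtain q where q: "q \<in> I" "coord_factor q \<subseteq> \<alpha> ` coord_factor p"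
    using iso_image_contains_coord_factor[OF \<alpha> coord_factor_normal[OF p] coord_factor_nontrivial[OF p]]
    by blast
  obtain p' where p': "p' \<in> I" "coord_factor p' \<subseteq> \<beta> ` coord_factor q"
    using iso_image_contains_coord_factor[OF \<beta> coord_factor_normal[OF q(1)] coord_factor_nontrivial[OF q(1)]]
    by blast
  have "coord_factor p' \<subseteq> \<beta> ` \<alpha> ` coord_factor p"
    using p'(2) image_mono[OF q(2)] by (rule order_trans)
  also have "\<beta> ` \<alpha> ` coord_factor p = coord_factor p"
    unfolding \<beta>_def using inj coord_factor_subset_carrier[OF p] by (rule inv_into_image_cancel)
  finally have "p' = p" by (rule coord_factor_subset_imp_eq[OF p p'(1)])
  then have "\<alpha> ` coord_factor p \<subseteq> \<alpha> ` \<beta> ` coord_factor q" using image_mono[OF p'(2)] by simp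
  also have "\<alpha> ` \<beta> ` coord_factor q = coord_factor q"
    unfolding \<beta>_def using sur coord_factor_subset_carrier[OF q(1)] by (rule image_inv_into_cancel)
  finally show ?thesis using q by blast
qed

lemma iso_permutes_coord_factors:
  assumes \<alpha>: "\<alpha> \<in> iso P P"
  obtains \<sigma> where "\<And>q. q \<in> I \<Longrightarrow> \<sigma> q \<in> I \<and> \<alpha> ` coord_factor (\<sigma> q) = coord_factor q"
    and "\<sigma> ` I = I"
proof -
  have inj: "inj_on \<alpha> (carrier P)" and sur: "\<alpha> ` carrier P = carrier P"
    using \<alpha> by (auto simp: iso_iff)
  have "\<exists>p\<in>I. \<alpha> ` coord_factor p = coord_factor q" if q: "q \<in> I" for q
  proof -
    define \<beta> where "\<beta> = inv_into (carrier P) \<alpha>"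
    have "\<beta> \<in> iso P P" unfolding \<beta>_def by (rule group.iso_set_sym[OF group_P \<alpha>])
    then obtain p where "p \<in> I" "\<beta> ` coord_factor q = coord_factor p"
      using iso_image_coord_factor q by blast
    moreover have "\<alpha> ` \<beta> ` coord_factor q = coord_factor q"
      unfolding \<beta>_def using sur coord_factor_subset_carrier[OF q] by (rule image_inv_into_cancel)
    ultimately show ?thesis by metis
  qed
  then obtain \<sigma> where \<sigma>: "\<And>q. q \<in> I \<Longrightarrow> \<sigma> q \<in> I \<and> \<alpha> ` coord_factor (\<sigma> q) = coord_factor q"
    by metis
  have "\<sigma> ` I \<subseteq> I" using \<sigma> by blast
  moreover have "I \<subseteq> \<sigma> ` I"
  proof
    fix p assume p: "p \<in> I"
    obtain q where q: "q \<in> I" "\<alpha> ` coord_factor p = coord_factor q"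
      using iso_image_coord_factor[OF \<alpha> p] by blast
    then have "\<alpha> ` coord_factor (\<sigma> q) = \<alpha> ` coord_factor p" using \<sigma> by simp
    then have "coord_factor (\<sigma> q) = coord_factor p"
      using inj_on_image_eq_iff[OF inj coord_factor_subset_carrier coord_factor_subset_carrier[OF p]]
        \<sigma>[OF q(1)] by blast
    then have "\<sigma> q = p" using coord_factor_subset_imp_eq[OF p] \<sigma>[OF q(1)] by blast
    then show "p \<in> \<sigma> ` I" using q(1) by blast
  qed
  ultimately show ?thesis by (intro that[OF \<sigma>] equalityI)
qed

text \<open>The rest of the argument centralizes the \<open>p\<close>-th factor, so its image centralizes the
  \<open>q\<close>-th factor, whose centre is trivial.\<close>

lemma hom_apply_coord:
  assumes h: "\<alpha> \<in> hom P P" and p: "p \<in> I" and q: "q \<in> I"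
    and img: "\<alpha> ` coord_factor p = coord_factor q" and x: "x \<in> carrier P"
  shows "\<alpha> x q = \<alpha> (coord_emb p (x p)) q"
proof -
  interpret PG: group P by (rule group_P)
  define e where "e = coord_emb p (x p)"
  have ec: "e \<in> carrier P" unfolding e_def using p by (rule coord_emb_carrier) (use x p in auto)
  define y where "y = x \<otimes>\<^bsub>P\<^esub> inv\<^bsub>P\<^esub> e"
  have yc: "y \<in> carrier P" unfolding y_def using x ec by (intro PG.m_closed PG.inv_closed)
  have xy: "x = y \<otimes>\<^bsub>P\<^esub> e"
    unfolding y_def using x ec by (simp only: PG.m_assoc PG.l_inv PG.r_one PG.inv_closed)
  have "x p \<in> carrier (G p)" using x p by auto
  then have "y p = \<one>\<^bsub>G p\<^esub>"
    unfolding y_def using p x ec group_member[OF p] by (simp add: e_def group.r_inv)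
  then have "\<alpha> y \<otimes>\<^bsub>P\<^esub> u = u \<otimes>\<^bsub>P\<^esub> \<alpha> y" if u: "u \<in> coord_factor q" for u
  proof -
    obtain t where t: "u = \<alpha> t" "t \<in> coord_factor p" using u img by blast
    have tc: "t \<in> carrier P" using t(2) coord_factor_subset_carrier[OF p] by blast
    have "\<alpha> y \<otimes>\<^bsub>P\<^esub> \<alpha> t = \<alpha> (y \<otimes>\<^bsub>P\<^esub> t)" "\<alpha> (t \<otimes>\<^bsub>P\<^esub> y) = \<alpha> t \<otimes>\<^bsub>P\<^esub> \<alpha> y"
      using hom_mult[OF h yc tc] hom_mult[OF h tc yc] by (simp_all del: mult_product_group)
    then show ?thesis
      using commute_with_coord_factor[OF p yc \<open>y p = _\<close> t(2)] t(1) by (simp del: mult_product_group)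
  qed
  then have "\<alpha> y q = \<one>\<^bsub>G q\<^esub>"
    using commutes_with_coord_factor_imp_one[OF q hom_in_carrier[OF h yc]] by blast
  moreover have "\<alpha> e q \<in> carrier (G q)" using hom_in_carrier[OF h ec] q by auto
  moreover have "\<alpha> x q = \<alpha> y q \<otimes>\<^bsub>G q\<^esub> \<alpha> e q"
    using xy hom_mult[OF h yc ec] q by simp
  ultimately show ?thesis using group_member[OF q] by (simp add: e_def group.is_monoid)
qed

lemma iso_mem_PiE_iff:
  assumes \<alpha>: "\<alpha> \<in> iso P P" and A: "\<And>p. p \<in> I \<Longrightarrow> A p \<subseteq> carrier (G p)"
    and \<sigma>: "\<And>q. q \<in> I \<Longrightarrow> \<sigma> q \<in> I \<and> \<alpha> ` coord_factor (\<sigma> q) = coord_factor q"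
    and onto: "\<sigma> ` I = I" and x: "x \<in> carrier P"
  shows "\<alpha> x \<in> PiE I (\<lambda>q. (\<lambda>t. \<alpha> (coord_emb (\<sigma> q) t) q) ` A (\<sigma> q)) \<longleftrightarrow> x \<in> PiE I A"
proof -
  define \<phi> where "\<phi> q t = \<alpha> (coord_emb (\<sigma> q) t) q" for q t
  have h: "\<alpha> \<in> hom P P" using \<alpha> by (simp add: iso_iff)
  have "\<alpha> x q = \<phi> q (x (\<sigma> q))" if "q \<in> I" for q
    unfolding \<phi>_def using hom_apply_coord[OF h _ that _ x] \<sigma>[OF that] by blast
  then have "\<alpha> x \<in> PiE I (\<lambda>q. \<phi> q ` A (\<sigma> q)) \<longleftrightarrow> (\<forall>q\<in>I. \<phi> q (x (\<sigma> q)) \<in> \<phi> q ` A (\<sigma> q))"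
    using hom_in_carrier[OF h x] by (auto simp: PiE_iff)
  also have "\<dots> \<longleftrightarrow> (\<forall>q\<in>I. x (\<sigma> q) \<in> A (\<sigma> q))"
  proof (intro ball_cong refl)
    fix q assume q: "q \<in> I"
    have "inj_on (\<phi> q) (carrier (G (\<sigma> q)))"
      using coord_iso[OF \<alpha> _ q] \<sigma>[OF q] unfolding \<phi>_def by (simp add: iso_iff)
    moreover have "x (\<sigma> q) \<in> carrier (G (\<sigma> q))" using x \<sigma>[OF q] by auto
    moreover have "A (\<sigma> q) \<subseteq> carrier (G (\<sigma> q))" using A \<sigma>[OF q] by blast
    ultimately show "\<phi> q (x (\<sigma> q)) \<in> \<phi> q ` A (\<sigma> q) \<longleftrightarrow> x (\<sigma> q) \<in> A (\<sigma> q)"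
      by (rule inj_on_image_mem_iff)
  qed
  also have "\<dots> \<longleftrightarrow> (\<forall>p\<in>\<sigma> ` I. x p \<in> A p)" by blast
  also have "\<dots> \<longleftrightarrow> x \<in> PiE I A" using x unfolding onto by (auto simp: PiE_iff)
  finally show ?thesis unfolding \<phi>_def .
qed

lemma iso_image_PiE:
  assumes \<alpha>: "\<alpha> \<in> iso P P" and A: "\<And>p. p \<in> I \<Longrightarrow> A p \<subseteq> carrier (G p)"
  obtains \<sigma> where "\<And>q. q \<in> I \<Longrightarrow> \<sigma> q \<in> I \<and> \<alpha> ` coord_factor (\<sigma> q) = coord_factor q"
    and "\<alpha> ` PiE I A = PiE I (\<lambda>q. (\<lambda>t. \<alpha> (coord_emb (\<sigma> q) t) q) ` A (\<sigma> q))"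
proof -
  obtain \<sigma> where \<sigma>: "\<And>q. q \<in> I \<Longrightarrow> \<sigma> q \<in> I \<and> \<alpha> ` coord_factor (\<sigma> q) = coord_factor q"
    and onto: "\<sigma> ` I = I"
    using iso_permutes_coord_factors[OF \<alpha>] by blast
  have B: "(\<lambda>t. \<alpha> (coord_emb (\<sigma> q) t) q) ` A (\<sigma> q) \<subseteq> carrier (G q)" if q: "q \<in> I" for q
  proof -
    have "A (\<sigma> q) \<subseteq> carrier (G (\<sigma> q))" using A \<sigma>[OF q] by blast
    then show ?thesis using coord_iso[OF \<alpha> _ q] \<sigma>[OF q] by (auto simp: iso_iff)
  qed
  have sub: "PiE I (\<lambda>q. (\<lambda>t. \<alpha> (coord_emb (\<sigma> q) t) q) ` A (\<sigma> q)) \<subseteq> carrier P"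
    using PiE_mono[OF B] by simp
  have "PiE I A \<subseteq> carrier P" using PiE_mono[OF A] by simp
  then have vimage: "PiE I A
      = {x \<in> carrier P. \<alpha> x \<in> PiE I (\<lambda>q. (\<lambda>t. \<alpha> (coord_emb (\<sigma> q) t) q) ` A (\<sigma> q))}"
    using iso_mem_PiE_iff[OF \<alpha> A \<sigma> onto] by blast
  have sur: "\<alpha> ` carrier P = carrier P" using \<alpha> by (simp add: iso_iff)
  from sur sub vimage have "\<alpha> ` PiE I A = PiE I (\<lambda>q. (\<lambda>t. \<alpha> (coord_emb (\<sigma> q) t) q) ` A (\<sigma> q))"
    by (rule image_eq_if_vimage_eq)
  with \<sigma> show ?thesis by (rule that)
qed

lemma iso_image_PiE_conj_set:
  assumes \<alpha>: "\<alpha> \<in> iso P P" and A: "\<And>p. p \<in> I \<Longrightarrow> A p \<subseteq> carrier (G p)"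
    and compat: "\<And>p q \<phi>. p \<in> I \<Longrightarrow> q \<in> I \<Longrightarrow> \<phi> \<in> iso (G p) (G q) \<Longrightarrow>
      \<exists>g\<in>carrier (G q). \<phi> ` A p = conj_set (G q) g (A q)"
  shows "\<exists>g\<in>carrier P. \<alpha> ` PiE I A = conj_set P g (PiE I A)"
proof -
  obtain \<sigma> where \<sigma>: "\<And>q. q \<in> I \<Longrightarrow> \<sigma> q \<in> I \<and> \<alpha> ` coord_factor (\<sigma> q) = coord_factor q"
    and img: "\<alpha> ` PiE I A = PiE I (\<lambda>q. (\<lambda>t. \<alpha> (coord_emb (\<sigma> q) t) q) ` A (\<sigma> q))"
    using iso_image_PiE[OF \<alpha> A] by blast
  have "\<exists>g\<in>carrier (G q). (\<lambda>t. \<alpha> (coord_emb (\<sigma> q) t) q) ` A (\<sigma> q) = conj_set (G q) g (A q)"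
    if q: "q \<in> I" for q
    using compat[OF _ q coord_iso[OF \<alpha> _ q]] \<sigma>[OF q] by blast
  then show ?thesis
    using PiE_conj_setI[OF A, of "\<lambda>q. (\<lambda>t. \<alpha> (coord_emb (\<sigma> q) t) q) ` A (\<sigma> q)"] img by simp
qed

lemma special_solvable_cp_fact_PiE:
  assumes fin: "finite I" and ne: "I \<noteq> {}"
    and fact: "\<And>i. i \<in> I \<Longrightarrow> special_solvable_cp_fact (G i) (A i) (Cs i)"
    and len: "\<And>i. i \<in> I \<Longrightarrow> length (Cs i) = k"
    and compat: "\<And>p q \<phi>. p \<in> I \<Longrightarrow> q \<in> I \<Longrightarrow> \<phi> \<in> iso (G p) (G q) \<Longrightarrow>
      \<exists>g\<in>carrier (G q). \<phi> ` A p = conj_set (G q) g (A q)"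
  shows "special_solvable_cp_fact P (PiE I A) (map (\<lambda>n. PiE I (\<lambda>i. Cs i ! n)) [0..<k])"
proof -
  have sub: "\<And>i. i \<in> I \<Longrightarrow> subgroup (A i) (G i)"
    using fact unfolding special_solvable_cp_fact_def by blast
  have A: "\<And>i. i \<in> I \<Longrightarrow> A i \<subseteq> carrier (G i)" using sub subgroup.subset by blast
  have "k > 0"
  proof -
    obtain i where "i \<in> I" using ne by blast
    then show ?thesis using fact len unfolding special_solvable_cp_fact_def by fastforce
  qed
  moreover have "subgroup (PiE I A) P"
    using PiE_subgroup_product_group[of I G A] group_member sub by blast
  moreover have "\<exists>g\<in>carrier P. PiE I (\<lambda>i. Cs i ! n) = conj_set P g (PiE I A)" if "n < k" for n
  proof (rule PiE_conj_setI[OF A])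
    fix i assume i: "i \<in> I"
    then have "Cs i ! n \<in> set (Cs i)" using that len by simp
    then show "\<exists>g\<in>carrier (G i). Cs i ! n = conj_set (G i) g (A i)"
      using fact[OF i] unfolding special_solvable_cp_fact_def by blast
  qed
  moreover have "set_prod_list P (map (\<lambda>n. PiE I (\<lambda>i. Cs i ! n)) [0..<k]) = carrier P"
  proof -
    have "set_prod_list P (map (\<lambda>n. PiE I (\<lambda>i. Cs i ! n)) [0..<k])
        = PiE I (\<lambda>i. set_prod_list (G i) (Cs i))"
      by (rule set_prod_list_PiE_nth[OF len])
    also have "\<dots> = carrier P" using fact by (simp add: special_solvable_cp_fact_def cong: PiE_cong)
    finally show ?thesis .
  qed
  moreover have "solvable (P\<lparr>carrier := PiE I A\<rparr>)"
    using fact sub by (intro solvable_PiE fin) (auto simp: special_solvable_cp_fact_def)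
  moreover have "normalizer_set P (PiE I A) = PiE I A"
    using fact sub by (intro normalizer_set_PiE) (auto simp: special_solvable_cp_fact_def)
  moreover have "\<exists>g\<in>carrier P. \<alpha> ` PiE I A = conj_set P g (PiE I A)" if "\<alpha> \<in> auto P" for \<alpha>
  proof (rule iso_image_PiE_conj_set[OF _ A compat])
    show "\<alpha> \<in> iso P P" using that by (auto simp: auto_def Bij_def iso_def)
  qed
  ultimately show ?thesis
    unfolding special_solvable_cp_fact_def by auto
qed

end

lemma special_solvable_cp_facts_common_length:
  assumes fin: "finite J" and ne: "J \<noteq> {}" and grp: "\<And>j. j \<in> J \<Longrightarrow> group (T j)"
    and finite_gamma: "\<And>j. j \<in> J \<Longrightarrow> gamma_ss_cp (T j) \<noteq> \<infinity>"
  shows "\<exists>A Cs k. (\<forall>j\<in>J. special_solvable_cp_fact (T j) (A j) (Cs j) \<and> length (Cs j) = k)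
    \<and> enat k \<le> Max ((\<lambda>j. gamma_ss_cp (T j)) ` J)"
proof -
  have "\<exists>A As. special_solvable_cp_fact (T j) A As \<and> gamma_ss_cp (T j) = enat (length As)"
    if j: "j \<in> J" for j
  proof -
    obtain A As where "special_solvable_cp_fact (T j) A As" "gamma_ss_cp (T j) = enat (length As)"
      using finite_gamma[OF j] by (rule gamma_ss_cp_attained)
    then show ?thesis by blast
  qed
  then obtain A As where AAs: "\<And>j. j \<in> J \<Longrightarrow>
      special_solvable_cp_fact (T j) (A j) (As j) \<and> gamma_ss_cp (T j) = enat (length (As j))"
    by metis
  define k where "k = Max ((\<lambda>j. length (As j)) ` J)"
  have "k \<in> (\<lambda>j. length (As j)) ` J" unfolding k_def using fin ne by (intro Max_in) auto
  then obtain j0 where j0: "j0 \<in> J" "k = length (As j0)" by blast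
  define Cs where "Cs j = replicate (k - length (As j)) (A j) @ As j" for j
  have "special_solvable_cp_fact (T j) (A j) (Cs j) \<and> length (Cs j) = k" if j: "j \<in> J" for j
  proof
    show "special_solvable_cp_fact (T j) (A j) (Cs j)"
      unfolding Cs_def using AAs[OF j] grp[OF j]
      by (intro group.special_solvable_cp_fact_replicate_append) auto
    have "length (As j) \<le> k" unfolding k_def using fin j by (intro Max_ge) auto
    then show "length (Cs j) = k" by (simp add: Cs_def)
  qed
  moreover have "enat k \<le> Max ((\<lambda>j. gamma_ss_cp (T j)) ` J)"
  proof -
    have "enat k = gamma_ss_cp (T j0)" using AAs[OF j0(1)] j0(2) by simp
    also have "\<dots> \<le> Max ((\<lambda>j. gamma_ss_cp (T j)) ` J)" using fin j0(1) by (intro Max_ge) auto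
    finally show ?thesis .
  qed
  ultimately show ?thesis by blast
qed

theorem lemma13:
  fixes T :: "nat \<Rightarrow> ('a, 'b) monoid_scheme" and r :: "nat \<Rightarrow> nat" and m :: nat
  assumes "m \<ge> 1"
    and "\<forall>j<m. simple_group (T j) \<and> finite (carrier (T j)) \<and> \<not> comm_group (T j)"
    and "\<forall>i<m. \<forall>j<m. i \<noteq> j \<longrightarrow> \<not> (T i \<cong> T j)"
    and "\<forall>j<m. r j \<ge> 1"
  shows "gamma_ss_cp (product_group (SIGMA j:{..<m}. {..<r j}) (\<lambda>p. T (fst p)))
           \<le> Max ((\<lambda>j. gamma_ss_cp (T j)) ` {..<m})"
proof (cases "\<exists>j<m. gamma_ss_cp (T j) = \<infinity>")
  case True
  then have "\<infinity> \<le> Max ((\<lambda>j. gamma_ss_cp (T j)) ` {..<m})"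
    by (intro Max_ge) (force simp: image_iff)+
  then show ?thesis by (rule order_trans[rotated]) simp
next
  case False
  let ?I = "SIGMA j:{..<m}. {..<r j}"
  have simple: "\<And>j. j < m \<Longrightarrow> simple_group (T j)" using assms(2) by blast
  interpret nonabelian_simple_family ?I "\<lambda>p. T (fst p)"
    using assms(2) simple
    by (intro nonabelian_simple_family.intro group_family.intro nonabelian_simple_family_axioms.intro)
      (auto intro: simple_group.axioms)
  have "\<exists>A Cs k. (\<forall>j\<in>{..<m}. special_solvable_cp_fact (T j) (A j) (Cs j) \<and> length (Cs j) = k)
    \<and> enat k \<le> Max ((\<lambda>j. gamma_ss_cp (T j)) ` {..<m})"
    using assms(1) False simple
    by (intro special_solvable_cp_facts_common_length) (auto simp: lessThan_empty_iff intro: simple_group.axioms)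
  then obtain A Cs k where fact: "\<And>j. j < m \<Longrightarrow> special_solvable_cp_fact (T j) (A j) (Cs j)"
    and len: "\<And>j. j < m \<Longrightarrow> length (Cs j) = k"
    and k: "enat k \<le> Max ((\<lambda>j. gamma_ss_cp (T j)) ` {..<m})"
    by auto
  have "special_solvable_cp_fact P (PiE ?I (\<lambda>p. A (fst p))) (map (\<lambda>n. PiE ?I (\<lambda>p. Cs (fst p) ! n)) [0..<k])"
  proof (rule special_solvable_cp_fact_PiE)
    have "(0, 0) \<in> ?I" using assms(1,4) by auto
    then show "?I \<noteq> {}" by blast
    fix p q \<phi> assume "p \<in> ?I" and q: "q \<in> ?I" and \<phi>: "\<phi> \<in> iso (T (fst p)) (T (fst q))"
    then have "fst p = fst q" using assms(3) is_isoI by fastforce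
    then show "\<exists>g\<in>carrier (T (fst q)). \<phi> ` A (fst p) = conj_set (T (fst q)) g (A (fst q))"
      using group.special_solvable_cp_fact_iso_image[OF _ fact] \<phi> q group_member by auto
  qed (use fact len in auto)
  then show ?thesis using gamma_ss_cp_le k order_trans by fastforce
qed

end
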